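(* Let $U\subset\mathbb{C}$ be open, let $\mu,a:U\to\mathbb{C}$ be holomorphic with $\mu\neq0$ and $|a|\neq1$ on $U$, and let $F(\theta;w)$ be the $\theta$-family of minimal surfaces defined by $a,\mu$. For $\theta\in\mathbb{R}$ and $w\in U$ set $$L_3(a)=\big(1+a\bar a,\;a+\bar a,\;-i(a-\bar a),\;-1+a\bar a\big),\qquad L_0(e^{i\theta}a)=\big(1+a\bar a,\;ae^{i\theta}+\bar ae^{-i\theta},\;-i(ae^{i\theta}-\bar ae^{-i\theta}),\;1-a\bar a\big),$$ (with $a=a(w)$), and $$\tau(\theta;a)=\frac{L_3(a)+L_0(e^{i\theta}a)}{\sqrt{-2\langle L_3(a),L_0(e^{i\theta}a)\rangle}},\qquad \nu(\theta;a)=\frac{L_3(a)-L_0(e^{i\theta}a)}{\sqrt{-2\langle L_3(a),L_0(e^{i\theta}a)\rangle}}.$$ Then $\tau(\theta;a(w))$ and $\nu(\theta;a(w))$ are the corresponding normal vectors of the surface $F(\theta;\cdot)$ at $w$ (an orthonormal basis of the normal plane, $\tau$ unit timelike, $\nu$ unit spacelike); the metric tensor of the surfaces of the family is $$\mathbf g(\theta;w)=4\mu(w)\overline{\mu(w)}\big(1-2a(w)\overline{a(w)}\cos\theta+(a(w)\overline{a(w)})^2\big)\,dw\,d\bar w;$$ and $\tau^3(\theta;w)\equiv0$ and $\nu^0(\theta;w)\equiv0$ for all $(\theta,w)\in\mathbb{R}\times U$.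
   Context: $\mathbb{R}^4_1$ has the Lorentz product $\langle x,y\rangle=-x^0y^0+x^1y^1+x^2y^2+x^3y^3$, extended complex-bilinearly to $\mathbb{C}^4$. For $a,b\in\mathbb{C}$ let $W(a,b)=(a+b,\;1+ab,\;i(1-ab),\;a-b)$. The $\theta$-family defined by holomorphic $\mu,a$ is $F(\theta;w)=P+2\operatorname{Re}\int_{w_0}^{w}\mu(\xi)W(a(\xi),e^{i\theta}a(\xi))\,d\xi$ for a fixed $P\in\mathbb{R}^4_1$ and $w_0\in U$ (assume $U$ simply connected so this is well defined); each $F(\theta;\cdot)$ is a minimal isothermal spacelike surface with $\partial_wF=\mu W(a,e^{i\theta}a)$. *)

theory Defs
  imports "HOL-Analysis.Analysis"
begin

text \<open>Vectors of R^4_1 and C^4 are modelled as real^4 / complex^4 with components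
  indexed 0,1,2,3 (the elements of the numeral type 4).\<close>

definition mk4 :: "'a \<Rightarrow> 'a \<Rightarrow> 'a \<Rightarrow> 'a \<Rightarrow> 'a^4" where
  "mk4 x0 x1 x2 x3 = (\<chi> k. if k = 0 then x0 else if k = 1 then x1 else if k = 2 then x2 else x3)"

definition lor :: "real^4 \<Rightarrow> real^4 \<Rightarrow> real" where
  "lor x y = - x$0 * y$0 + x$1 * y$1 + x$2 * y$2 + x$3 * y$3"

definition lorC :: "complex^4 \<Rightarrow> complex^4 \<Rightarrow> complex" where
  "lorC x y = - x$0 * y$0 + x$1 * y$1 + x$2 * y$2 + x$3 * y$3"

definition W :: "complex \<Rightarrow> complex \<Rightarrow> complex^4" where
  "W a b = mk4 (a + b) (1 + a*b) (\<i> * (1 - a*b)) (a - b)"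

text \<open>L_3(a) and L_0(e^{i theta} a), written literally in C^4; all entries are real,
  so the real vectors are obtained by taking real parts componentwise.\<close>
definition L3C :: "complex \<Rightarrow> complex^4" where
  "L3C a = mk4 (1 + a * cnj a) (a + cnj a) (- \<i> * (a - cnj a)) (-1 + a * cnj a)"

definition L0C :: "real \<Rightarrow> complex \<Rightarrow> complex^4" where
  "L0C \<theta> a = mk4 (1 + a * cnj a) (a * exp (\<i> * \<theta>) + cnj a * exp (- \<i> * \<theta>))
      (- \<i> * (a * exp (\<i> * \<theta>) - cnj a * exp (- \<i> * \<theta>))) (1 - a * cnj a)"

definition L3 :: "complex \<Rightarrow> real^4" where
  "L3 a = (\<chi> k. Re (L3C a $ k))"

definition L0 :: "real \<Rightarrow> complex \<Rightarrow> real^4" where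
  "L0 \<theta> a = (\<chi> k. Re (L0C \<theta> a $ k))"

definition tau :: "real \<Rightarrow> complex \<Rightarrow> real^4" where
  "tau \<theta> a = (1 / sqrt (- 2 * lor (L3 a) (L0 \<theta> a))) *\<^sub>R (L3 a + L0 \<theta> a)"

definition nu :: "real \<Rightarrow> complex \<Rightarrow> real^4" where
  "nu \<theta> a = (1 / sqrt (- 2 * lor (L3 a) (L0 \<theta> a))) *\<^sub>R (L3 a - L0 \<theta> a)"

text \<open>The theta-family F(theta; w) = P + 2 Re G(theta; w), where G(theta; .) is the holomorphic
  primitive int_{w0}^w mu(xi) W(a(xi), e^{i theta} a(xi)) d xi (vanishing at w0).\<close>
definition theta_primitive ::
  "complex set \<Rightarrow> complex \<Rightarrow> (complex \<Rightarrow> complex) \<Rightarrow> (complex \<Rightarrow> complex)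
     \<Rightarrow> (real \<Rightarrow> complex \<Rightarrow> complex^4) \<Rightarrow> bool" where
  "theta_primitive U w0 \<mu> a G \<longleftrightarrow>
     (\<forall>\<theta>. G \<theta> w0 = 0 \<and>
       (\<forall>w\<in>U. \<forall>k. ((\<lambda>z. G \<theta> z $ k) has_field_derivative
                       (\<mu> w * W (a w) (exp (\<i> * \<theta>) * a w) $ k)) (at w)))"

definition theta_family ::
  "real^4 \<Rightarrow> (real \<Rightarrow> complex \<Rightarrow> complex^4) \<Rightarrow> real \<Rightarrow> complex \<Rightarrow> real^4" where
  "theta_family P G \<theta> w = P + (\<chi> k. 2 * Re (G \<theta> w $ k))"

end

theory Submission
  imports Defs
begin

text \<open>With \<open>b = e\<^sup>i\<^sup>\<theta> a\<close>, the holomorphic derivative \<open>\<mu> W(a, b)\<close> is a null vector of \<open>\<complex>\<^sup>4\<close>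
  that is complex-orthogonal to the two real null vectors \<open>L\<^sub>3(a)\<close> and \<open>L\<^sub>0(b)\<close>, and
  \<open>\<langle>L\<^sub>3(a), L\<^sub>0(b)\<rangle> = -2 |1 - a cnj b|\<^sup>2 < 0\<close> since \<open>|a cnj b| = |a|\<^sup>2 \<noteq> 1\<close>. So the tangent plane, spanned
  by the real and imaginary parts of \<open>\<mu> W\<close>, is orthogonal to \<open>L\<^sub>3 \<plusminus> L\<^sub>0\<close>, and normalising the
  sum and difference of two null vectors gives a unit timelike and a unit spacelike vector.
  Nullity of \<open>\<mu> W\<close> makes the parametrisation conformal, with factor
  \<open>2\<langle>\<mu> W, cnj (\<mu> W)\<rangle> = 4 |\<mu>|\<^sup>2 |1 - a cnj b|\<^sup>2\<close>.\<close>

lemma mk4_nth [simp]: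
  "mk4 x0 x1 x2 x3 $ 0 = x0" "mk4 x0 x1 x2 x3 $ 1 = x1"
  "mk4 x0 x1 x2 x3 $ 2 = x2" "mk4 x0 x1 x2 x3 $ 3 = x3"
  by (simp_all add: mk4_def)

definition Re4 :: "complex^4 \<Rightarrow> real^4" where
  "Re4 z = (\<chi> k. Re (z $ k))"

definition cnj4 :: "complex^4 \<Rightarrow> complex^4" where
  "cnj4 z = (\<chi> k. cnj (z $ k))"

definition L0C_at :: "complex \<Rightarrow> complex^4" where
  "L0C_at b = mk4 (1 + b * cnj b) (b + cnj b) (- \<i> * (b - cnj b)) (1 - b * cnj b)"

lemma L0C_eq_L0C_at: "L0C \<theta> a = L0C_at (exp (\<i> * \<theta>) * a)"
  by (simp add: L0C_def L0C_at_def exp_cnj mult_ac exp_minus_inverse)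

lemma cnj4_mk4 [simp]: "cnj4 (mk4 x0 x1 x2 x3) = mk4 (cnj x0) (cnj x1) (cnj x2) (cnj x3)"
  by (simp add: cnj4_def mk4_def vec_eq_iff)

lemma cnj4_scale: "cnj4 (h *s z) = cnj h *s cnj4 z"
  by (simp add: cnj4_def vec_eq_iff)

lemma cnj4_L3C: "cnj4 (L3C a) = L3C a"
  by (simp add: L3C_def algebra_simps)

lemma cnj4_L0C_at: "cnj4 (L0C_at b) = L0C_at b"
  by (simp add: L0C_at_def algebra_simps)

lemma lorC_scale_left: "lorC (h *s z) v = h * lorC z v"
  by (simp add: lorC_def algebra_simps)

lemma lorC_scale_right: "lorC z (h *s v) = h * lorC z v"
  by (simp add: lorC_def algebra_simps)

text \<open>The following are polynomial identities in \<open>a, b, cnj a, cnj b\<close> regarded as independent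
  variables.\<close>

lemma lorC_W_W: "lorC (W a b) (W a b) = 0"
  by (simp add: lorC_def W_def algebra_simps power2_eq_square)

lemma lorC_W_cnj4_W: "lorC (W a b) (cnj4 (W a b)) = 2 * (1 - a * cnj b) * (1 - cnj a * b)"
  by (simp add: lorC_def W_def algebra_simps)

lemma lorC_W_L3C: "lorC (W a b) (L3C a) = 0"
  by (simp add: lorC_def W_def L3C_def algebra_simps)

lemma lorC_W_L0C_at: "lorC (W a b) (L0C_at b) = 0"
  by (simp add: lorC_def W_def L0C_at_def algebra_simps)

lemma lorC_L3C_L3C: "lorC (L3C a) (L3C a) = 0"
  by (simp add: lorC_def L3C_def algebra_simps)

lemma lorC_L0C_at_L0C_at: "lorC (L0C_at b) (L0C_at b) = 0"
  by (simp add: lorC_def L0C_at_def algebra_simps)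

lemma lorC_L3C_L0C_at: "lorC (L3C a) (L0C_at b) = - 2 * (1 - a * cnj b) * (1 - cnj a * b)"
  by (simp add: lorC_def L3C_def L0C_at_def algebra_simps)

lemma lorC_W_cnj4_W_rotated:
  fixes \<theta> :: real
  shows "lorC (W a (exp (\<i> * \<theta>) * a)) (cnj4 (W a (exp (\<i> * \<theta>) * a)))
           = 2 * (1 - 2 * a * cnj a * cos \<theta> + (a * cnj a)\<^sup>2)"
proof -
  have unit: "exp (\<i> * \<theta>) * cnj (exp (\<i> * \<theta>)) = 1"
    by (simp add: exp_cnj exp_minus_inverse)
  have cos: "exp (\<i> * \<theta>) + cnj (exp (\<i> * \<theta>)) = 2 * complex_of_real (cos \<theta>)"
    by (simp add: cos_of_real [symmetric] cos_exp_eq exp_cnj)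
  show ?thesis
    unfolding lorC_W_cnj4_W complex_cnj_mult using unit cos by algebra
qed

lemma lor_commute: "lor x y = lor y x"
  by (simp add: lor_def algebra_simps)

lemma lor_add_left: "lor (x + y) z = lor x z + lor y z"
  and lor_diff_left: "lor (x - y) z = lor x z - lor y z"
  and lor_scaleR_left: "lor (r *\<^sub>R x) z = r * lor x z"
  and lor_add_right: "lor z (x + y) = lor z x + lor z y"
  and lor_diff_right: "lor z (x - y) = lor z x - lor z y"
  and lor_scaleR_right: "lor z (r *\<^sub>R x) = r * lor z x"
  by (simp_all add: lor_def algebra_simps)

lemmas lor_bilinear = lor_add_left lor_diff_left lor_scaleR_left
  lor_add_right lor_diff_right lor_scaleR_right

lemma lor_Re4_real:
  assumes "cnj4 v = v"
  shows "lor (Re4 z) (Re4 v) = Re (lorC z v)"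
proof -
  have "Im (v $ k) = 0" for k
    using assms by (simp add: cnj4_def vec_eq_iff complex_eq_iff)
  then show ?thesis
    by (simp add: lor_def lorC_def Re4_def)
qed

lemma null_pair_frame:
  assumes "lor p p = 0" "lor q q = 0" "lor p q < 0"
  defines "t \<equiv> (1 / sqrt (- 2 * lor p q)) *\<^sub>R (p + q)"
    and "n \<equiv> (1 / sqrt (- 2 * lor p q)) *\<^sub>R (p - q)"
  shows "lor t t = -1" "lor n n = 1" "lor t n = 0"
proof -
  have "sqrt (- 2 * lor p q) ^ 2 = - 2 * lor p q"
    using assms(3) by simp
  moreover have "lor q p = lor p q"
    by (rule lor_commute)
  ultimately show "lor t t = -1" "lor n n = 1" "lor t n = 0"
    using assms(1-3)
    by (simp_all add: t_def n_def lor_bilinear power2_eq_square field_simps)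
qed

lemma L3_eq_Re4: "L3 a = Re4 (L3C a)"
  by (simp add: L3_def Re4_def)

lemma L0_eq_Re4: "L0 \<theta> a = Re4 (L0C_at (exp (\<i> * \<theta>) * a))"
  by (simp add: L0_def Re4_def L0C_eq_L0C_at)

lemma lor_L3_L3: "lor (L3 a) (L3 a) = 0"
  by (simp add: L3_eq_Re4 lor_Re4_real cnj4_L3C lorC_L3C_L3C)

lemma lor_L0_L0: "lor (L0 \<theta> a) (L0 \<theta> a) = 0"
  by (simp add: L0_eq_Re4 lor_Re4_real cnj4_L0C_at lorC_L0C_at_L0C_at)

lemma lor_L3_Re4_L0C_at: "lor (L3 a) (Re4 (L0C_at b)) = - 2 * (cmod (1 - a * cnj b))\<^sup>2"
proof -
  have "lorC (L3C a) (L0C_at b) = - 2 * ((1 - a * cnj b) * cnj (1 - a * cnj b))"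
    by (simp add: lorC_L3C_L0C_at algebra_simps)
  also have "\<dots> = complex_of_real (- 2 * (cmod (1 - a * cnj b))\<^sup>2)"
    by (subst of_real_mult, subst complex_norm_square) simp
  finally show ?thesis
    by (simp add: L3_eq_Re4 lor_Re4_real cnj4_L0C_at)
qed

lemma lor_L3_L0_neg:
  assumes "cmod a \<noteq> 1"
  shows "lor (L3 a) (L0 \<theta> a) < 0"
proof -
  have "cmod (a * cnj (exp (\<i> * \<theta>) * a)) = (cmod a)\<^sup>2"
    by (simp add: norm_mult power2_eq_square)
  also have "\<dots> \<noteq> 1"
    by (smt (verit) assms norm_ge_zero power2_eq_1_iff)
  finally have "1 - a * cnj (exp (\<i> * \<theta>) * a) \<noteq> 0"
    by auto
  then show ?thesis
    by (simp add: L0_eq_Re4 lor_L3_Re4_L0C_at)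
qed

lemma tau_nu_orthonormal:
  assumes "cmod a \<noteq> 1"
  shows "lor (tau \<theta> a) (tau \<theta> a) = -1" "lor (nu \<theta> a) (nu \<theta> a) = 1"
    "lor (tau \<theta> a) (nu \<theta> a) = 0"
  unfolding tau_def nu_def
  using null_pair_frame[OF lor_L3_L3 lor_L0_L0 lor_L3_L0_neg[OF assms]] by simp_all

lemma tau_nth_3: "tau \<theta> a $ 3 = 0"
  by (simp add: tau_def L3_def L3C_def L0_def L0C_def)

lemma nu_nth_0: "nu \<theta> a $ 0 = 0"
  by (simp add: nu_def L3_def L3C_def L0_def L0C_def)

text \<open>The differential of \<open>2 Re g\<close> at a point where \<open>g' = c\<close>.\<close>

definition real_differential :: "complex^4 \<Rightarrow> complex \<Rightarrow> real^4" where
  "real_differential c h = 2 *\<^sub>R Re4 (h *s c)"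

lemma has_derivative_Re4:
  assumes "\<And>k. ((\<lambda>z. f z $ k) has_field_derivative c $ k) (at w)"
  shows "((\<lambda>z. Re4 (f z)) has_derivative (\<lambda>h. Re4 (h *s c))) (at w)"
proof (rule iffD2[OF has_derivative_componentwise_within], intro ballI)
  fix i :: "real^4" assume "i \<in> Basis"
  then obtain k where i: "i = axis k 1" by (auto simp: Basis_vec_def)
  have "((\<lambda>z. Re (f z $ k)) has_derivative (\<lambda>h. Re (h * c $ k))) (at w)"
    using bounded_linear.has_derivative[OF bounded_linear_Re
        has_field_derivative_imp_has_derivative[OF assms]]
    by (simp add: mult.commute)
  then show "((\<lambda>z. Re4 (f z) \<bullet> i) has_derivative (\<lambda>h. Re4 (h *s c) \<bullet> i)) (at w)"
    by (simp add: i inner_axis Re4_def)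
qed

lemma has_derivative_theta_family:
  fixes \<theta> :: real
  assumes "theta_primitive U w0 \<mu> a G" "w \<in> U"
  shows "(theta_family P G \<theta> has_derivative
          real_differential (\<mu> w *s W (a w) (exp (\<i> * \<theta>) * a w))) (at w)"
proof -
  define c where "c = \<mu> w *s W (a w) (exp (\<i> * \<theta>) * a w)"
  have "theta_family P G \<theta> = (\<lambda>z. P + 2 *\<^sub>R Re4 (G \<theta> z))"
    by (simp add: theta_family_def Re4_def vec_eq_iff fun_eq_iff)
  moreover have "\<And>k. ((\<lambda>z. G \<theta> z $ k) has_field_derivative c $ k) (at w)"
    using assms by (simp add: theta_primitive_def c_def)
  ultimately show ?thesis
    unfolding real_differential_def c_def[symmetric]
    by (auto intro!: derivative_eq_intros has_derivative_Re4)
qed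

lemma real_differential_orthogonal:
  assumes "lorC c v = 0" "cnj4 v = v"
  shows "lor (real_differential c h) (Re4 v) = 0"
  using assms by (simp add: real_differential_def lor_bilinear lor_Re4_real lorC_scale_left)

lemma real_differential_W_normal:
  fixes \<theta> :: real
  shows "lor (real_differential (m *s W a (exp (\<i> * \<theta>) * a)) h) (tau \<theta> a) = 0"
    and "lor (real_differential (m *s W a (exp (\<i> * \<theta>) * a)) h) (nu \<theta> a) = 0"
proof -
  have "lor (real_differential (m *s W a (exp (\<i> * \<theta>) * a)) h) (L3 a) = 0"
    "lor (real_differential (m *s W a (exp (\<i> * \<theta>) * a)) h) (L0 \<theta> a) = 0"
    unfolding L3_eq_Re4 L0_eq_Re4
    by (simp_all add: real_differential_orthogonal lorC_scale_left lorC_W_L3C lorC_W_L0C_at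
        cnj4_L3C cnj4_L0C_at)
  then show "lor (real_differential (m *s W a (exp (\<i> * \<theta>) * a)) h) (tau \<theta> a) = 0"
    "lor (real_differential (m *s W a (exp (\<i> * \<theta>) * a)) h) (nu \<theta> a) = 0"
    by (simp_all add: tau_def nu_def lor_bilinear)
qed

lemma real_differential_conformal:
  assumes "lorC c c = 0"
  shows "complex_of_real (lor (real_differential c 1) (real_differential c 1)) = 2 * lorC c (cnj4 c)"
    and "complex_of_real (lor (real_differential c \<i>) (real_differential c \<i>)) = 2 * lorC c (cnj4 c)"
    and "lor (real_differential c 1) (real_differential c \<i>) = 0"
  using assms
  by (simp_all add: real_differential_def lor_def lorC_def Re4_def cnj4_def complex_eq_iff
      power2_eq_square algebra_simps)

lemma real_differential_W_metric:
  fixes \<theta> :: real and m a :: complex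
  defines "D \<equiv> real_differential (m *s W a (exp (\<i> * \<theta>) * a))"
  shows "complex_of_real (lor (D 1) (D 1)) =
           4 * m * cnj m * (1 - 2 * a * cnj a * cos \<theta> + (a * cnj a)\<^sup>2)"
    and "complex_of_real (lor (D \<i>) (D \<i>)) =
           4 * m * cnj m * (1 - 2 * a * cnj a * cos \<theta> + (a * cnj a)\<^sup>2)"
    and "lor (D 1) (D \<i>) = 0"
proof -
  have "lorC (m *s W a (exp (\<i> * \<theta>) * a)) (m *s W a (exp (\<i> * \<theta>) * a)) = 0"
    by (simp add: lorC_scale_left lorC_scale_right lorC_W_W)
  note conformal = real_differential_conformal[OF this, folded D_def]
  have "2 * lorC (m *s W a (exp (\<i> * \<theta>) * a)) (cnj4 (m *s W a (exp (\<i> * \<theta>) * a))) =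
          4 * m * cnj m * (1 - 2 * a * cnj a * cos \<theta> + (a * cnj a)\<^sup>2)"
    by (simp add: cnj4_scale lorC_scale_left lorC_scale_right lorC_W_cnj4_W_rotated)
  with conformal show "complex_of_real (lor (D 1) (D 1)) =
           4 * m * cnj m * (1 - 2 * a * cnj a * cos \<theta> + (a * cnj a)\<^sup>2)"
    and "complex_of_real (lor (D \<i>) (D \<i>)) =
           4 * m * cnj m * (1 - 2 * a * cnj a * cos \<theta> + (a * cnj a)\<^sup>2)"
    and "lor (D 1) (D \<i>) = 0"
    by simp_all
qed

theorem mainTheorem7:
  fixes U :: "complex set" and \<mu> a :: "complex \<Rightarrow> complex" and w0 :: complex
    and P :: "real^4" and G :: "real \<Rightarrow> complex \<Rightarrow> complex^4"
    and F :: "real \<Rightarrow> complex \<Rightarrow> real^4"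
  assumes "open U"
    and "\<mu> holomorphic_on U" and "a holomorphic_on U"
    and "\<forall>w\<in>U. \<mu> w \<noteq> 0" and "\<forall>w\<in>U. cmod (a w) \<noteq> 1"
    and "w0 \<in> U"
    and "theta_primitive U w0 \<mu> a G"
    and "F = theta_family P G"
  shows "\<forall>\<theta>::real. \<forall>w\<in>U.
     (\<exists>D. (F \<theta> has_derivative D) (at w) \<and>
        lor (D 1) (tau \<theta> (a w)) = 0 \<and> lor (D \<i>) (tau \<theta> (a w)) = 0 \<and>
        lor (D 1) (nu \<theta> (a w)) = 0 \<and> lor (D \<i>) (nu \<theta> (a w)) = 0 \<and>
        lor (tau \<theta> (a w)) (tau \<theta> (a w)) = -1 \<and>
        lor (nu \<theta> (a w)) (nu \<theta> (a w)) = 1 \<and>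
        lor (tau \<theta> (a w)) (nu \<theta> (a w)) = 0 \<and>
        complex_of_real (lor (D 1) (D 1)) =
          4 * \<mu> w * cnj (\<mu> w) * (1 - 2 * a w * cnj (a w) * cos \<theta> + (a w * cnj (a w))^2) \<and>
        complex_of_real (lor (D \<i>) (D \<i>)) =
          4 * \<mu> w * cnj (\<mu> w) * (1 - 2 * a w * cnj (a w) * cos \<theta> + (a w * cnj (a w))^2) \<and>
        lor (D 1) (D \<i>) = 0) \<and>
     tau \<theta> (a w) $ 3 = 0 \<and> nu \<theta> (a w) $ 0 = 0"
  apply (intro allI ballI conjI tau_nth_3 nu_nth_0)
  subgoal for \<theta> w
    using assms(5,8) tau_nu_orthonormal[where \<theta> = \<theta> and a = "a w"]
      has_derivative_theta_family[OF assms(7), where \<theta> = \<theta> and P = P]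
      real_differential_W_normal[where \<theta> = \<theta> and m = "\<mu> w" and a = "a w"]
      real_differential_W_metric[where \<theta> = \<theta> and m = "\<mu> w" and a = "a w"]
    by (intro exI[of _ "real_differential (\<mu> w *s W (a w) (exp (\<i> * \<theta>) * a w))"]) auto
  done

end
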